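(* For any space $X$ and $x\in X$, the following are equivalent: (1) $X$ is sequentially $0$-connected at $x$; (2) $X$ is path connected and $0$-tame at $x$; (3) $X$ is path connected and $\pi_0$-residual at $x$; (4) every sequence of (unbased) maps $\{f_{k}\}_{k\in\mathbb{N}}$, $f_k:S^0\to X$, that converges to $x$ is sequentially null-homotopic; (5) for every convergent sequence $x_k\to x$ in $X$, there exists a path $\alpha:I\to X$ such that $\alpha(1/k)=x_k$ for all $k$ and $\alpha(0)=x$.
   Context: All spaces Hausdorff; $I=[0,1]$, $S^0=\{-1,1\}$. $\mathbb{H}_0=\{0\}\cup\{1/m:m\in\mathbb{N}\}$ with basepoint $b_0=0$, and $\ell_m:S^0\to\mathbb{H}_0$ sends $-1\mapsto 0$, $1\mapsto 1/m$ (inclusion of the $m$-th copy of $S^0$ in the shrinking wedge). $[(\mathbb{H}_0,b_0),(X,x)]$ is the set of based homotopy classes; $\Theta_0:[(\mathbb{H}_0,b_0),(X,x)]\to\pi_0(X,x)^{\mathbb{N}}$, $[f]\mapsto([f\circ\ell_m])_m$. $X$ is sequentially $0$-connected at $x$ if $[(\mathbb{H}_0,b_0),(X,x)]$ is a singleton; $\pi_0$-residual at $x$ if $\Theta_0$ is injective; $\pi_0$-finitary at $x$ if every element of the image of $\Theta_0$ has all but finitely many coordinates equal to the path component of $x$; $0$-tame at $x$ if it is $\pi_0$-residual and $\pi_0$-finitary at $x$. A sequence of maps $\{f_k\}$ converges to $x$ if for every neighborhood $U$ of $x$, $\operatorname{Im}(f_k)\subseteq U$ for all but finitely many $k$; it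 is sequentially null-homotopic if there are free homotopies $H_k$ from $f_k$ to the constant map at $x$ such that $\{H_k\}$ converges to $x$. *)

theory Defs
  imports "HOL-Analysis.Analysis"
begin

definition H0_set :: "real set" where
  "H0_set = insert 0 {1 / real m | m. m \<ge> 1}"

definition H0 :: "real topology" where
  "H0 = subtopology euclideanreal H0_set"

definition S0 :: "real topology" where
  "S0 = subtopology euclideanreal {-1, 1}"

definition ell :: "nat \<Rightarrow> real \<Rightarrow> real" where
  "ell m t = (if t = -1 then 0 else 1 / real m)"

definition based_H0_map :: "'a topology \<Rightarrow> 'a \<Rightarrow> (real \<Rightarrow> 'a) \<Rightarrow> bool" where
  "based_H0_map X x f \<longleftrightarrow> continuous_map H0 X f \<and> f 0 = x"

definition based_H0_homotopic :: "'a topology \<Rightarrow> 'a \<Rightarrow> (real \<Rightarrow> 'a) \<Rightarrow> (real \<Rightarrow> 'a) \<Rightarrow> bool" where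
  "based_H0_homotopic X x f g \<longleftrightarrow> homotopic_with (\<lambda>h. h 0 = x) H0 X f g"

text \<open>Based homotopy of based maps (S^0,-1) \<rightarrow> (X,x); classes form \<pi>_0(X,x).\<close>
definition based_S0_homotopic :: "'a topology \<Rightarrow> 'a \<Rightarrow> (real \<Rightarrow> 'a) \<Rightarrow> (real \<Rightarrow> 'a) \<Rightarrow> bool" where
  "based_S0_homotopic X x f g \<longleftrightarrow> homotopic_with (\<lambda>h. h (-1) = x) S0 X f g"

text \<open>[(H_0,b_0),(X,x)] is a singleton (it always contains the constant map).\<close>
definition seq_0_connected_at :: "'a topology \<Rightarrow> 'a \<Rightarrow> bool" where
  "seq_0_connected_at X x \<longleftrightarrow>
     (\<forall>f g. based_H0_map X x f \<and> based_H0_map X x g \<longrightarrow> based_H0_homotopic X x f g)"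

text \<open>\<Theta>_0 injective: equal coordinates [f \<circ> l_m] = [g \<circ> l_m] for all m \<in> \<nat> imply [f] = [g].\<close>
definition pi0_residual_at :: "'a topology \<Rightarrow> 'a \<Rightarrow> bool" where
  "pi0_residual_at X x \<longleftrightarrow>
     (\<forall>f g. based_H0_map X x f \<and> based_H0_map X x g \<and>
        (\<forall>m\<ge>1. based_S0_homotopic X x (f \<circ> ell m) (g \<circ> ell m))
        \<longrightarrow> based_H0_homotopic X x f g)"

text \<open>Every element of the image of \<Theta>_0 has all but finitely many coordinates equal
  to the path component of x, i.e. the class of the constant map.\<close>
definition pi0_finitary_at :: "'a topology \<Rightarrow> 'a \<Rightarrow> bool" where
  "pi0_finitary_at X x \<longleftrightarrow>
     (\<forall>f. based_H0_map X x f \<longrightarrow>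
        finite {m. m \<ge> 1 \<and> \<not> based_S0_homotopic X x (f \<circ> ell m) (\<lambda>_. x)})"

definition tame0_at :: "'a topology \<Rightarrow> 'a \<Rightarrow> bool" where
  "tame0_at X x \<longleftrightarrow> pi0_residual_at X x \<and> pi0_finitary_at X x"

definition maps_converge_to :: "'b topology \<Rightarrow> 'a topology \<Rightarrow> (nat \<Rightarrow> 'b \<Rightarrow> 'a) \<Rightarrow> 'a \<Rightarrow> bool" where
  "maps_converge_to D X f x \<longleftrightarrow>
     (\<forall>U. openin X U \<and> x \<in> U \<longrightarrow> eventually (\<lambda>k. f k ` topspace D \<subseteq> U) sequentially)"

definition seq_null_homotopic :: "'b topology \<Rightarrow> 'a topology \<Rightarrow> (nat \<Rightarrow> 'b \<Rightarrow> 'a) \<Rightarrow> 'a \<Rightarrow> bool" where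
  "seq_null_homotopic D X f x \<longleftrightarrow>
     (\<exists>H :: nat \<Rightarrow> real \<times> 'b \<Rightarrow> 'a.
        (\<forall>k. continuous_map (prod_topology (top_of_set {0..1}) D) X (H k) \<and>
             (\<forall>t \<in> topspace D. H k (0, t) = f k t \<and> H k (1, t) = x)) \<and>
        maps_converge_to (prod_topology (top_of_set {0..1}) D) X H x)"

end

theory Submission
  imports Defs
begin

text \<open>A based map \<open>f : H\<^sub>0 \<rightarrow> X\<close> is the same as a sequence \<open>f(1/k) \<rightarrow> x\<close>. Condition (5) says
  that every such \<open>f\<close> extends to a path \<open>\<alpha>\<close> on \<open>[0,1] \<supseteq> H\<^sub>0\<close>, and then
  \<open>(t, s) \<mapsto> \<alpha>((1 - t) s)\<close> contracts \<open>f\<close>; so (5) implies (1). Conversely, a based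
  null-homotopy of \<open>f\<close> provides paths from \<open>f(1/k)\<close> to \<open>x\<close> that shrink uniformly to \<open>x\<close>
  (tube lemma), and going out and back along consecutive ones strings all of them into a
  single path through every \<open>f(1/k)\<close>. Condition (5) gives (4) when applied to the interleaved
  sequence \<open>f\<^sub>0(-1), f\<^sub>0(1), f\<^sub>1(-1), \<dots>\<close>: a path through it contracts all \<open>f\<^sub>k\<close> at once.
  Conversely, for \<open>f\<^sub>k = (x, x\<^sub>k)\<close> the homotopies of (4) are shrinking paths from \<open>x\<^sub>k\<close> to \<open>x\<close>.
  Finally, in a path-connected space every based map \<open>S\<^sup>0 \<rightarrow> X\<close> is null-homotopic, so
  \<open>\<Theta>\<^sub>0\<close> has a single point as image: \<open>\<pi>\<^sub>0\<close>-finitarity is automatic and \<open>\<pi>\<^sub>0\<close>-residuality says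
  that \<open>[(H\<^sub>0,b\<^sub>0),(X,x)]\<close> is a singleton.\<close>

section \<open>Maps out of \<open>S\<^sup>0\<close> and \<open>H\<^sub>0\<close>\<close>

lemma continuous_map_top_of_set_real_iff:
  fixes S :: "real set"
  shows "continuous_map (top_of_set S) X f \<longleftrightarrow>
    f ` S \<subseteq> topspace X \<and>
    (\<forall>t\<in>S. \<forall>U. openin X U \<and> f t \<in> U \<longrightarrow> (\<exists>e>0. \<forall>s\<in>S. dist s t < e \<longrightarrow> f s \<in> U))"
  unfolding continuous_map_def openin_euclidean_subtopology_iff
  by (auto simp: Pi_iff image_subset_iff)

lemma S0_eq_discrete_topology: "S0 = discrete_topology {-1, 1}"
  unfolding S0_def
  by (intro finite_t1_space_imp_discrete_topology Hausdorff_imp_t1_space Hausdorff_space_subtopology) auto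

lemma continuous_map_S0_iff:
  "continuous_map S0 X f \<longleftrightarrow> f (-1) \<in> topspace X \<and> f 1 \<in> topspace X"
  by (auto simp: S0_eq_discrete_topology)

lemma topspace_S0 [simp]: "topspace S0 = {-1, 1}"
  by (simp add: S0_def)

lemma topspace_H0 [simp]: "topspace H0 = H0_set"
  by (simp add: H0_def)

lemma zero_in_H0_set [simp]: "0 \<in> H0_set"
  by (simp add: H0_set_def)

lemma inverse_nat_in_H0_set: "k \<ge> 1 \<Longrightarrow> 1 / real k \<in> H0_set"
  by (auto simp: H0_set_def)

lemma H0_set_cases:
  assumes "t \<in> H0_set"
  obtains "t = 0" | m where "m \<ge> 1" "t = 1 / real m"
  using assms by (auto simp: H0_set_def)

lemma H0_set_subset_unit_interval: "H0_set \<subseteq> {0..1}"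
  by (auto simp: H0_set_def)

lemma eventually_inverse_nat_less: "e > 0 \<Longrightarrow> \<forall>\<^sub>F k in sequentially. 1 / real k < e"
  using order_tendstoD(2)[OF lim_inverse_n'] by (simp add: o_def)

lemma isolated_inverse_nat_in_H0_set:
  assumes m: "m \<ge> 1" and s: "s \<in> H0_set" and near: "dist s (1 / real m) < 1 / (real m * (real m + 1))"
  shows "s = 1 / real m"
proof -
  have gap: "1 / (real m * (real m + 1)) = 1 / real m - 1 / (real m + 1)"
    using m by (simp add: field_simps)
  show ?thesis
  using s proof (cases rule: H0_set_cases)
    case 1
    then show ?thesis using near gap m by (simp add: dist_real_def)
  next
    case (2 n)
    consider "n = m" | "n \<ge> m + 1" | "n + 1 \<le> m" by linarith
    then show ?thesis
    proof cases
      case 2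
      then have "1 / real n \<le> 1 / (real m + 1)" using m by (simp add: frac_le)
      then show ?thesis using near gap \<open>s = 1 / real n\<close> m by (simp add: dist_real_def)
    next
      case 3
      then have "1 / (real m - 1) \<le> 1 / real n" using \<open>n \<ge> 1\<close> by (simp add: frac_le)
      moreover have "1 / (real m - 1) - 1 / real m = 1 / (real m * (real m - 1))"
        using 3 \<open>n \<ge> 1\<close> by (simp add: field_simps)
      moreover have "1 / (real m * (real m + 1)) \<le> 1 / (real m * (real m - 1))"
        using 3 \<open>n \<ge> 1\<close> by (intro frac_le) auto
      ultimately show ?thesis using near \<open>s = 1 / real n\<close> m by (simp add: dist_real_def)
    qed (simp add: \<open>s = 1 / real n\<close>)
  qed
qed

lemma continuous_map_H0_iff:
  "continuous_map H0 X g \<longleftrightarrow>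
    g ` H0_set \<subseteq> topspace X \<and> limitin X (\<lambda>k. g (1 / real k)) (g 0) sequentially"
  (is "?cont \<longleftrightarrow> ?into \<and> ?lim")
proof
  assume ?cont
  then have into: ?into and near: "\<And>t U. t \<in> H0_set \<Longrightarrow> openin X U \<Longrightarrow> g t \<in> U \<Longrightarrow>
      \<exists>e>0. \<forall>s\<in>H0_set. dist s t < e \<longrightarrow> g s \<in> U"
    unfolding H0_def continuous_map_top_of_set_real_iff by blast+
  have ?lim
    unfolding limitin_def
  proof (intro conjI allI impI)
    show "g 0 \<in> topspace X" using into by auto
    fix U assume "openin X U \<and> g 0 \<in> U"
    then obtain e where "e > 0" and e: "\<And>s. s \<in> H0_set \<Longrightarrow> dist s 0 < e \<Longrightarrow> g s \<in> U"
      using near[of 0 U] by auto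
    show "\<forall>\<^sub>F k in sequentially. g (1 / real k) \<in> U"
      using eventually_inverse_nat_less[OF \<open>e > 0\<close>] eventually_ge_at_top[of 1]
      by eventually_elim (simp add: e inverse_nat_in_H0_set)
  qed
  with into show "?into \<and> ?lim" ..
next
  assume "?into \<and> ?lim"
  then have into: ?into and lim: ?lim by blast+
  show ?cont
    unfolding H0_def continuous_map_top_of_set_real_iff
  proof (intro conjI ballI allI impI into)
    fix t U assume t: "t \<in> H0_set" and U: "openin X U \<and> g t \<in> U"
    show "\<exists>e>0. \<forall>s\<in>H0_set. dist s t < e \<longrightarrow> g s \<in> U"
    using t proof (cases rule: H0_set_cases)
      case 1
      then obtain N where N: "\<And>k. k \<ge> N \<Longrightarrow> g (1 / real k) \<in> U"
        using lim U unfolding limitin_def eventually_sequentially by blast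
      have "g s \<in> U" if "s \<in> H0_set" "dist s 0 < 1 / (real N + 1)" for s
      using that(1) proof (cases rule: H0_set_cases)
        case (2 m)
        with that(2) have "real N + 1 < real m" using \<open>m \<ge> 1\<close> by (simp add: field_simps)
        then show ?thesis using N[of m] \<open>s = 1 / real m\<close> by simp
      qed (use U 1 in simp)
      then show ?thesis using 1 by (intro exI[of _ "1 / (real N + 1)"]) auto
    next
      case (2 m)
      then show ?thesis
        using U isolated_inverse_nat_in_H0_set[of m]
        by (intro exI[of _ "1 / (real m * (real m + 1))"]) auto
    qed
  qed
qed

section \<open>Paths through a convergent sequence\<close>

lemma pathin_near_start:
  assumes "pathin X \<alpha>" "openin X U" "\<alpha> 0 \<in> U"
  obtains e where "e > 0" "\<And>t. t \<in> {0..1} \<Longrightarrow> t < e \<Longrightarrow> \<alpha> t \<in> U"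
proof -
  obtain e where "e > 0" "\<forall>t\<in>{0..1}. dist t 0 < e \<longrightarrow> \<alpha> t \<in> U"
    using assms unfolding pathin_def continuous_map_top_of_set_real_iff by force
  then show thesis by (intro that[of e]) (auto simp: dist_real_def)
qed

lemma pathin_from_continuous_off_start:
  assumes cont: "continuous_map (top_of_set {0<..1}) X \<alpha>"
    and start: "\<alpha> 0 \<in> topspace X"
    and near: "\<And>U. openin X U \<Longrightarrow> \<alpha> 0 \<in> U \<Longrightarrow> \<exists>e>0. \<forall>t\<in>{0<..1}. t < e \<longrightarrow> \<alpha> t \<in> U"
  shows "pathin X \<alpha>"
  unfolding pathin_def continuous_map_top_of_set_real_iff
proof (intro conjI ballI allI impI)
  have "\<alpha> ` {0<..1} \<subseteq> topspace X"
    using cont by (simp add: continuous_map_top_of_set_real_iff)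
  then show "\<alpha> ` {0..1} \<subseteq> topspace X"
    using start by (auto simp: image_subset_iff less_eq_real_def)
next
  fix t U assume t: "t \<in> {0..1::real}" and U: "openin X U \<and> \<alpha> t \<in> U"
  show "\<exists>e>0. \<forall>s\<in>{0..1}. dist s t < e \<longrightarrow> \<alpha> s \<in> U"
  proof (cases "t = 0")
    case True
    then obtain e where "e > 0" "\<forall>s\<in>{0<..1}. s < e \<longrightarrow> \<alpha> s \<in> U"
      using near U by blast
    then show ?thesis
      using True U by (intro exI[of _ e]) (auto simp: dist_real_def less_eq_real_def)
  next
    case False
    with t have "t \<in> {0<..1}" by auto
    then obtain e where "e > 0" "\<forall>s\<in>{0<..1}. dist s t < e \<longrightarrow> \<alpha> s \<in> U"
      using cont U unfolding continuous_map_top_of_set_real_iff by blast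
    then show ?thesis
      using \<open>t \<in> {0<..1}\<close> by (intro exI[of _ "min e t"]) (auto simp: dist_real_def)
  qed
qed

lemma pathin_join:
  assumes "pathin X p" "pathin X q" "p 1 = q 0"
  shows "pathin X (\<lambda>t. if t \<le> 1/2 then p (2 * t) else q (2 * t - 1))"
  unfolding pathin_def
proof (rule continuous_map_cases_le)
  have "continuous_map (top_of_set {0..1/2}) (top_of_set {0..1}) (\<lambda>t::real. 2 * t)"
    by (auto intro!: continuous_intros)
  from continuous_map_compose[OF this assms(1)[unfolded pathin_def]]
  have "continuous_map (top_of_set {0..1/2}) X (\<lambda>t. p (2 * t))"
    by (simp add: o_def)
  moreover have "{0..1} \<inter> {t \<in> {0..1}. t \<le> 1/2} = {0..1/2::real}"
    by auto
  ultimately show "continuous_map (subtopology (top_of_set {0..1}) {t \<in> topspace (top_of_set {0..1}). t \<le> 1/2}) X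
      (\<lambda>t. p (2 * t))"
    by (simp add: subtopology_subtopology)
  have "continuous_map (top_of_set {1/2..1}) (top_of_set {0..1}) (\<lambda>t::real. 2 * t - 1)"
    by (auto intro!: continuous_intros)
  from continuous_map_compose[OF this assms(2)[unfolded pathin_def]]
  have "continuous_map (top_of_set {1/2..1}) X (\<lambda>t. q (2 * t - 1))"
    by (simp add: o_def)
  moreover have "{0..1} \<inter> {t \<in> {0..1}. 1/2 \<le> t} = {1/2..1::real}"
    by auto
  ultimately show "continuous_map (subtopology (top_of_set {0..1}) {t \<in> topspace (top_of_set {0..1}). 1/2 \<le> t}) X
      (\<lambda>t. q (2 * t - 1))"
    by (simp add: subtopology_subtopology)
  show "p (2 * t) = q (2 * t - 1)" if "t \<in> topspace (top_of_set {0..1})" "t = 1/2" for t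
    using assms(3) by (simp add: that(2))
qed auto

lemma pathin_reverse: "pathin X p \<Longrightarrow> pathin X (\<lambda>t. p (1 - t))"
  unfolding pathin_def
  by (rule continuous_map_compose[of _ "top_of_set {0..1}", unfolded o_def])
     (auto intro!: continuous_intros)

text \<open>On \<open>[1/(n+1), 1/n]\<close> the concatenation runs through \<open>\<gamma> n\<close>, reparametrised by
  \<open>t \<mapsto> 1/t - n\<close>.\<close>
definition infinite_concatenation :: "(nat \<Rightarrow> real \<Rightarrow> 'a) \<Rightarrow> 'a \<Rightarrow> real \<Rightarrow> 'a" where
  "infinite_concatenation \<gamma> x t = (if t = 0 then x else \<gamma> (nat \<lfloor>1 / t\<rfloor>) (frac (1 / t)))"

lemma infinite_concatenation_0 [simp]: "infinite_concatenation \<gamma> x 0 = x"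
  by (simp add: infinite_concatenation_def)

lemma infinite_concatenation_inverse_nat [simp]:
  "n \<ge> 1 \<Longrightarrow> infinite_concatenation \<gamma> x (1 / real n) = \<gamma> n 0"
  by (simp add: infinite_concatenation_def frac_def)

lemma infinite_concatenation_piece:
  assumes n: "n \<ge> 1" and link: "\<gamma> n 1 = \<gamma> (Suc n) 0" and t: "t \<in> {1 / (real n + 1)..1 / real n}"
  shows "infinite_concatenation \<gamma> x t = \<gamma> n (1 / t - real n)"
proof (cases "t = 1 / (real n + 1)")
  case True
  then show ?thesis using link by (simp add: infinite_concatenation_def frac_def nat_add_distrib)
next
  case False
  with t n have "real n \<le> 1 / t" "1 / t < real n + 1"
    by (auto simp: field_simps)
  then have "\<lfloor>1 / t\<rfloor> = int n" by (simp add: floor_eq_iff)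
  then show ?thesis using t n by (auto simp: infinite_concatenation_def frac_def)
qed

lemma in_piece_floor_inverse:
  assumes t: "t \<in> {0<..1}" and n: "n = nat \<lfloor>1 / t\<rfloor>"
  shows "n \<ge> 1" "t \<in> {1 / (real n + 1)..1 / real n}"
proof -
  have "1 \<le> 1 / t" using t by (simp add: field_simps)
  then have n: "n \<ge> 1" "real n \<le> 1 / t" "1 / t < real n + 1"
    unfolding n by linarith+
  then show "n \<ge> 1" by simp
  from n have "t \<le> 1 / real n" "1 / (real n + 1) \<le> t"
    using t by (simp_all add: field_simps)
  then show "t \<in> {1 / (real n + 1)..1 / real n}"
    by simp
qed

lemma finite_pieces_meeting:
  assumes "e > 0"
  shows "finite {n. {1 / (real n + 1)..1 / real n} \<inter> {e<..} \<noteq> {}}"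
proof (rule finite_subset)
  show "{n. {1 / (real n + 1)..1 / real n} \<inter> {e<..} \<noteq> {}} \<subseteq> {..nat \<lceil>1 / e\<rceil>}"
  proof
    fix n assume "n \<in> {n. {1 / (real n + 1)..1 / real n} \<inter> {e<..} \<noteq> {}}"
    then obtain s where "e < s" "s \<le> 1 / real n"
      by auto
    moreover have "n \<noteq> 0"
      using \<open>e > 0\<close> \<open>e < s\<close> \<open>s \<le> 1 / real n\<close> by (intro notI) simp
    ultimately have "n \<ge> 1" "e < 1 / real n"
      by simp_all
    then have "real n < 1 / e" using \<open>e > 0\<close> by (simp add: field_simps)
    then show "n \<in> {..nat \<lceil>1 / e\<rceil>}" by simp linarith
  qed
qed simp

lemma continuous_map_piece_reparametrisation:
  assumes "n \<ge> 1"
  shows "continuous_map (top_of_set {1 / (real n + 1)..1 / real n}) (top_of_set {0..1})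
    (\<lambda>t. 1 / t - real n)"
proof -
  have pos: "t > 0" if "t \<in> {1 / (real n + 1)..1 / real n}" for t
    using that by (auto intro: less_le_trans[of 0 "1 / (real n + 1)"])
  have "(\<lambda>t. 1 / t - real n) \<in> {1 / (real n + 1)..1 / real n} \<rightarrow> {0..1}"
  proof
    fix t assume t: "t \<in> {1 / (real n + 1)..1 / real n}"
    with pos[OF t] assms have "real n \<le> 1 / t" "1 / t \<le> real n + 1"
      by (auto simp: field_simps)
    then show "1 / t - real n \<in> {0..1}"
      by simp
  qed
  moreover have "continuous_on {1 / (real n + 1)..1 / real n} (\<lambda>t. 1 / t - real n)"
    using pos by (intro continuous_intros) auto
  ultimately show ?thesis
    by (simp add: continuous_map_subtopology_eu)
qed

lemma continuous_map_infinite_concatenation: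
  assumes paths: "\<And>n. n \<ge> 1 \<Longrightarrow> pathin X (\<gamma> n)"
    and link: "\<And>n. n \<ge> 1 \<Longrightarrow> \<gamma> n 1 = \<gamma> (Suc n) 0"
  shows "continuous_map (top_of_set {0<..1}) X (infinite_concatenation \<gamma> x)"
proof -
  have piece: "infinite_concatenation \<gamma> x t = \<gamma> n (1 / t - real n)"
    if "n \<ge> 1" "t \<in> {1 / (real n + 1)..1 / real n}" for n t
    using infinite_concatenation_piece[OF that(1) link[OF that(1)] that(2)] .
  show ?thesis
  proof (rule pasting_lemma_locally_finite[where I = "{1..}" and T = "\<lambda>n. {1 / (real n + 1)..1 / real n}"
        and f = "\<lambda>n t. \<gamma> n (1 / t - real n)"])
    fix t assume "t \<in> topspace (top_of_set {0<..1::real})"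
    then have "t > 0" "t \<in> {0<..1} \<inter> {t / 2<..}" by auto
    moreover have "finite {n \<in> {1..}. {1 / (real n + 1)..1 / real n} \<inter> ({0<..1} \<inter> {t / 2<..}) \<noteq> {}}"
      using finite_pieces_meeting[of "t / 2"] \<open>t > 0\<close> by (auto elim: finite_subset[rotated])
    ultimately show "\<exists>V. openin (top_of_set {0<..1}) V \<and> t \<in> V \<and>
        finite {n \<in> {1..}. {1 / (real n + 1)..1 / real n} \<inter> V \<noteq> {}}"
      by (intro exI[of _ "{0<..1} \<inter> {t / 2<..}"]) auto
  next
    fix n :: nat assume "n \<in> {1..}"
    then have "0 < 1 / (real n + 1)" "1 / real n \<le> 1"
      by simp_all
    then have sub: "{1 / (real n + 1)..1 / real n} \<subseteq> {0<..1}"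
      unfolding subset_iff by (smt (verit) atLeastAtMost_iff greaterThanAtMost_iff)
    then show "closedin (top_of_set {0<..1}) {1 / (real n + 1)..1 / real n}"
      by (intro closed_subset) auto
    from continuous_map_compose[OF continuous_map_piece_reparametrisation paths[unfolded pathin_def]]
      \<open>n \<in> {1..}\<close>
    have "continuous_map (top_of_set {1 / (real n + 1)..1 / real n}) X (\<lambda>t. \<gamma> n (1 / t - real n))"
      by (simp add: o_def)
    then show "continuous_map (subtopology (top_of_set {0<..1}) {1 / (real n + 1)..1 / real n}) X
        (\<lambda>t. \<gamma> n (1 / t - real n))"
      using sub by (simp add: subtopology_subtopology Int_absorb1)
  next
    fix i j t assume "i \<in> {1..}" "j \<in> {1..}"
      and "t \<in> topspace (top_of_set {0<..1}) \<inter> {1 / (real i + 1)..1 / real i} \<inter> {1 / (real j + 1)..1 / real j}"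
    then show "\<gamma> i (1 / t - real i) = \<gamma> j (1 / t - real j)"
      using piece by (metis IntD1 IntD2 atLeast_iff)
  next
    fix t assume "t \<in> topspace (top_of_set {0<..1::real})"
    then show "\<exists>n. n \<in> {1..} \<and> t \<in> {1 / (real n + 1)..1 / real n} \<and>
        infinite_concatenation \<gamma> x t = \<gamma> n (1 / t - real n)"
      using in_piece_floor_inverse[OF _ refl] piece
      by (metis atLeast_iff topspace_euclidean_subtopology)
  qed
qed

lemma pathin_infinite_concatenation:
  assumes paths: "\<And>n. n \<ge> 1 \<Longrightarrow> pathin X (\<gamma> n)"
    and link: "\<And>n. n \<ge> 1 \<Longrightarrow> \<gamma> n 1 = \<gamma> (Suc n) 0"
    and x: "x \<in> topspace X"
    and shrink: "\<And>U. openin X U \<Longrightarrow> x \<in> U \<Longrightarrow> \<forall>\<^sub>F n in sequentially. \<gamma> n ` {0..1} \<subseteq> U"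
  shows "pathin X (infinite_concatenation \<gamma> x)"
proof (rule pathin_from_continuous_off_start)
  fix U assume U: "openin X U" "infinite_concatenation \<gamma> x 0 \<in> U"
  then obtain N where N: "\<And>n. n \<ge> N \<Longrightarrow> \<gamma> n ` {0..1} \<subseteq> U"
    using shrink[OF U(1)] unfolding eventually_sequentially by auto
  have "infinite_concatenation \<gamma> x t \<in> U" if "t \<in> {0<..1}" "t < 1 / (real N + 1)" for t
  proof -
    have "real N + 1 < 1 / t" using that by (simp add: field_simps)
    then have "nat \<lfloor>1 / t\<rfloor> \<ge> N" by linarith
    moreover have "frac (1 / t) \<in> {0..1}"
      using frac_lt_1[of "1 / t"] by simp
    ultimately show ?thesis
      using N that(1) by (force simp: infinite_concatenation_def image_subset_iff)
  qed
  then show "\<exists>e>0. \<forall>t\<in>{0<..1}. t < e \<longrightarrow> infinite_concatenation \<gamma> x t \<in> U"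
    by (intro exI[of _ "1 / (real N + 1)"]) auto
qed (use continuous_map_infinite_concatenation[where \<gamma> = \<gamma> and X = X and x = x, OF paths link] x in auto)

lemma pathin_through_shrinking_paths:
  fixes p :: "nat \<Rightarrow> real \<Rightarrow> 'a"
  assumes paths: "\<And>k. k \<ge> 1 \<Longrightarrow> pathin X (p k)"
    and ends: "\<And>k. k \<ge> 1 \<Longrightarrow> p k 1 = x"
    and x: "x \<in> topspace X"
    and shrink: "\<And>U. openin X U \<Longrightarrow> x \<in> U \<Longrightarrow> \<forall>\<^sub>F k in sequentially. p k ` {0..1} \<subseteq> U"
  obtains \<alpha> where "pathin X \<alpha>" "\<alpha> 0 = x" "\<And>k. k \<ge> 1 \<Longrightarrow> \<alpha> (1 / real k) = p k 0"
proof -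
  define \<gamma> where "\<gamma> n t = (if t \<le> 1/2 then p n (2 * t) else p (Suc n) (1 - (2 * t - 1)))" for n t
  have \<gamma>_paths: "pathin X (\<gamma> n)" if "n \<ge> 1" for n
  proof -
    have "pathin X (\<lambda>t. p (Suc n) (1 - t))"
      using that by (intro pathin_reverse paths) simp
    moreover have "p n 1 = p (Suc n) (1 - 0)"
      using that ends[of n] ends[of "Suc n"] by simp
    ultimately show ?thesis
      unfolding \<gamma>_def by (rule pathin_join[OF paths[OF that]])
  qed
  have \<gamma>_link: "\<gamma> n 1 = \<gamma> (Suc n) 0" if "n \<ge> 1" for n
    by (simp add: \<gamma>_def)
  have \<gamma>_shrink: "\<forall>\<^sub>F n in sequentially. \<gamma> n ` {0..1} \<subseteq> U" if "openin X U" "x \<in> U" for U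
  proof -
    have "\<forall>\<^sub>F n in sequentially. p n ` {0..1} \<subseteq> U \<and> p (Suc n) ` {0..1} \<subseteq> U"
      using shrink[OF that] eventually_sequentially_Suc[of "\<lambda>n. p n ` {0..1} \<subseteq> U"]
      by (simp add: eventually_conj_iff)
    then show ?thesis
      by eventually_elim (force simp: \<gamma>_def)
  qed
  have "pathin X (infinite_concatenation \<gamma> x)"
    using \<gamma>_paths \<gamma>_link x \<gamma>_shrink by (rule pathin_infinite_concatenation)
  then show thesis
    by (intro that[of "infinite_concatenation \<gamma> x"]) (simp_all add: \<gamma>_def)
qed

section \<open>Contracting along a path\<close>

lemma continuous_map_path_contraction:
  assumes g: "continuous_map D (top_of_set {0..1}) g" and \<alpha>: "pathin X \<alpha>"
  shows "continuous_map (prod_topology (top_of_set {0..1}) D) X (\<lambda>z. \<alpha> ((1 - fst z) * g (snd z)))"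
proof -
  have gR: "continuous_map D euclideanreal g" and g01: "g ` topspace D \<subseteq> {0..1}"
    using g by (simp_all add: continuous_map_in_subtopology image_subset_iff_funcset)
  have "continuous_map (prod_topology (top_of_set {0..1}) D) euclideanreal (\<lambda>z. g (snd z))"
    using continuous_map_compose[OF continuous_map_snd gR] by (simp add: o_def)
  moreover have "continuous_map (prod_topology (top_of_set {0..1}) D) euclideanreal fst"
    using continuous_map_compose[OF continuous_map_fst continuous_map_from_subtopology[OF continuous_map_id]]
    by (simp add: o_def)
  ultimately have "continuous_map (prod_topology (top_of_set {0..1}) D) (top_of_set {0..1})
      (\<lambda>z. (1 - fst z) * g (snd z))"
    using g01 by (auto simp: continuous_map_in_subtopology image_subset_iff mult_le_one
        intro!: continuous_intros continuous_map_from_subtopology)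
  from continuous_map_compose[OF this \<alpha>[unfolded pathin_def]] show ?thesis
    by (simp add: o_def)
qed

lemma homotopic_with_path_contraction:
  assumes g: "continuous_map D (top_of_set {0..1}) g" and \<alpha>: "pathin X \<alpha>" and "g b = 0"
  shows "homotopic_with (\<lambda>h. h b = \<alpha> 0) D X (\<alpha> \<circ> g) (\<lambda>_. \<alpha> 0)"
  unfolding homotopic_with_def
  using continuous_map_path_contraction[OF g \<alpha>] \<open>g b = 0\<close>
  by (intro exI[of _ "\<lambda>z. \<alpha> ((1 - fst z) * g (snd z))"]) auto

lemma maps_converge_to_path_contraction:
  assumes \<alpha>: "pathin X \<alpha>"
    and c01: "\<And>k d. d \<in> topspace D \<Longrightarrow> c k d \<in> {0..1}"
    and small: "\<And>k d. d \<in> topspace D \<Longrightarrow> c k d \<le> r k" and r: "r \<longlonglongrightarrow> 0"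
  shows "maps_converge_to (prod_topology (top_of_set {0..1}) D) X
    (\<lambda>k z. \<alpha> ((1 - fst z) * c k (snd z))) (\<alpha> 0)"
  unfolding maps_converge_to_def
proof (intro allI impI)
  fix U assume "openin X U \<and> \<alpha> 0 \<in> U"
  then obtain e where "e > 0" and e: "\<And>t. t \<in> {0..1} \<Longrightarrow> t < e \<Longrightarrow> \<alpha> t \<in> U"
    using pathin_near_start[OF \<alpha>] by metis
  have near: "\<alpha> ((1 - t) * c k d) \<in> U" if "r k < e" "t \<in> {0..1}" "d \<in> topspace D" for k t d
  proof -
    have "0 \<le> (1 - t) * c k d" "(1 - t) * c k d \<le> c k d"
      using that(2) c01[OF that(3)] by (simp_all add: mult_left_le_one_le)
    moreover have "c k d \<le> 1" "c k d \<le> r k"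
      using c01[OF that(3)] small[OF that(3)] by auto
    ultimately show ?thesis
      using that(1) by (intro e) auto
  qed
  show "\<forall>\<^sub>F k in sequentially.
      (\<lambda>z. \<alpha> ((1 - fst z) * c k (snd z))) ` topspace (prod_topology (top_of_set {0..1}) D) \<subseteq> U"
    using order_tendstoD(2)[OF r \<open>e > 0\<close>] by eventually_elim (auto intro: near)
qed

lemma homotopy_near_fixed_point:
  fixes G :: "real \<times> 'b \<Rightarrow> 'a"
  assumes G: "continuous_map (prod_topology (top_of_set {0..1}) D) X G"
    and b: "b \<in> topspace D" and fixed: "\<And>t. t \<in> {0..1} \<Longrightarrow> G (t, b) = x"
    and U: "openin X U" "x \<in> U"
  obtains V where "openin D V" "b \<in> V" "\<And>t d. t \<in> {0..1} \<Longrightarrow> d \<in> V \<Longrightarrow> G (t, d) \<in> U"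
proof -
  define W where "W = {z \<in> topspace (prod_topology (top_of_set {0..1}) D). G z \<in> U}"
  have W: "openin (prod_topology (top_of_set {0..1}) D) W"
    unfolding W_def using G U(1) by (rule openin_continuous_map_preimage)
  have compact: "compactin (top_of_set {0..1}) {0..(1::real)}"
    by (simp add: compactin_subtopology)
  have "{0..1} \<times> {b} \<subseteq> W"
    using b fixed U(2) by (auto simp: W_def)
  from tube_lemma_left[OF W compact b this]
  obtain T V where "openin D V" "b \<in> V" "{0..1} \<subseteq> T" "T \<times> V \<subseteq> W"
    by blast
  moreover have "G z \<in> U" if "z \<in> W" for z
    using that by (simp add: W_def)
  ultimately show thesis
    using that[of V] by blast
qed

definition convergent_seqs_on_paths_at :: "'a topology \<Rightarrow> 'a \<Rightarrow> bool" where
  "convergent_seqs_on_paths_at X x \<longleftrightarrow>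
     (\<forall>xs :: nat \<Rightarrow> 'a. (\<forall>k\<ge>1. xs k \<in> topspace X) \<and> limitin X xs x sequentially
        \<longrightarrow> (\<exists>\<alpha>. pathin X \<alpha> \<and> \<alpha> 0 = x \<and> (\<forall>k\<ge>1. \<alpha> (1 / real k) = xs k)))"

definition convergent_S0_maps_null_at :: "'a topology \<Rightarrow> 'a \<Rightarrow> bool" where
  "convergent_S0_maps_null_at X x \<longleftrightarrow>
     (\<forall>f :: nat \<Rightarrow> real \<Rightarrow> 'a. (\<forall>k. continuous_map S0 X (f k)) \<and> maps_converge_to S0 X f x
        \<longrightarrow> seq_null_homotopic S0 X f x)"

lemma convergent_seqs_on_pathsD:
  assumes "convergent_seqs_on_paths_at X x"
    and "\<And>k. k \<ge> 1 \<Longrightarrow> xs k \<in> topspace X" "limitin X xs x sequentially"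
  obtains \<alpha> where "pathin X \<alpha>" "\<alpha> 0 = x" "\<And>k. k \<ge> 1 \<Longrightarrow> \<alpha> (1 / real k) = xs k"
  using assms unfolding convergent_seqs_on_paths_at_def by blast

lemma convergent_seqs_on_paths_imp_based_H0_null_homotopic:
  assumes E: "convergent_seqs_on_paths_at X x" and f: "based_H0_map X x f"
  shows "based_H0_homotopic X x f (\<lambda>_. x)"
proof -
  have f0: "f 0 = x" and into: "f ` H0_set \<subseteq> topspace X"
    and lim: "limitin X (\<lambda>k. f (1 / real k)) x sequentially"
    using f by (auto simp: based_H0_map_def continuous_map_H0_iff)
  have "f (1 / real k) \<in> topspace X" if "k \<ge> 1" for k
    using into inverse_nat_in_H0_set[OF that] by blast
  then obtain \<alpha> where \<alpha>: "pathin X \<alpha>" "\<alpha> 0 = x" "\<And>k. k \<ge> 1 \<Longrightarrow> \<alpha> (1 / real k) = f (1 / real k)"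
    using convergent_seqs_on_pathsD[OF E _ lim] by blast
  have "continuous_map H0 (top_of_set {0..1}) id"
    using H0_set_subset_unit_interval by (auto simp: H0_def continuous_map_in_subtopology)
  from homotopic_with_path_contraction[OF this \<alpha>(1)]
  have "homotopic_with (\<lambda>h. h 0 = x) H0 X \<alpha> (\<lambda>_. x)"
    using \<alpha>(2) by simp
  moreover have "f s = \<alpha> s" if "s \<in> H0_set" for s
    using that by (cases rule: H0_set_cases) (simp_all add: f0 \<alpha>(2,3))
  ultimately show ?thesis
    unfolding based_H0_homotopic_def by (rule homotopic_with_eq) simp_all
qed

lemma convergent_seqs_on_paths_imp_seq_0_connected:
  assumes E: "convergent_seqs_on_paths_at X x"
  shows "seq_0_connected_at X x"
  unfolding seq_0_connected_at_def
proof (intro allI impI)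
  fix f g assume "based_H0_map X x f \<and> based_H0_map X x g"
  then have "based_H0_homotopic X x f (\<lambda>_. x)" "based_H0_homotopic X x g (\<lambda>_. x)"
    using convergent_seqs_on_paths_imp_based_H0_null_homotopic[OF E] by auto
  then show "based_H0_homotopic X x f g"
    unfolding based_H0_homotopic_def by (meson homotopic_with_sym homotopic_with_trans)
qed

lemma convergent_seqs_on_paths_imp_path_connected:
  assumes E: "convergent_seqs_on_paths_at X x" and x: "x \<in> topspace X"
  shows "path_connected_space X"
proof -
  have from_x: "path_component_of X x y" if y: "y \<in> topspace X" for y
  proof -
    define xs where "xs k = (if k = 1 then y else x)" for k :: nat
    have "\<forall>\<^sub>F k in sequentially. x = xs k"
      using eventually_gt_at_top[of 1] by eventually_elim (simp add: xs_def)
    then have "limitin X xs x sequentially"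
      by (rule limitin_transform_eventually) (simp add: x)
    moreover have "xs k \<in> topspace X" for k
      using x y by (simp add: xs_def)
    ultimately obtain \<alpha> where "pathin X \<alpha>" "\<alpha> 0 = x" "\<And>k. k \<ge> 1 \<Longrightarrow> \<alpha> (1 / real k) = xs k"
      using convergent_seqs_on_pathsD[OF E, of xs] by blast
    moreover have "\<alpha> 1 = y"
      using \<open>\<And>k. k \<ge> 1 \<Longrightarrow> \<alpha> (1 / real k) = xs k\<close>[of 1] by (simp add: xs_def)
    ultimately show ?thesis
      unfolding path_component_of_def by blast
  qed
  show ?thesis
    unfolding path_connected_space_iff_path_component
  proof (intro ballI)
    fix y z assume "y \<in> topspace X" "z \<in> topspace X"
    then show "path_component_of X y z"
      using from_x path_component_of_sym path_component_of_trans by metis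
  qed
qed

lemma path_connected_imp_based_S0_null_homotopic:
  assumes "path_connected_space X" and \<phi>: "continuous_map S0 X \<phi>" "\<phi> (-1) = x"
  shows "based_S0_homotopic X x \<phi> (\<lambda>_. x)"
proof -
  have "x \<in> topspace X" "\<phi> 1 \<in> topspace X"
    using \<phi> by (auto simp: continuous_map_S0_iff)
  then obtain \<alpha> where \<alpha>: "pathin X \<alpha>" "\<alpha> 0 = x" "\<alpha> 1 = \<phi> 1"
    using assms(1) unfolding path_connected_space_def by blast
  have "continuous_map S0 (top_of_set {0..1}) (\<lambda>s. (s + 1) / 2)"
    by (simp add: continuous_map_S0_iff)
  from homotopic_with_path_contraction[OF this \<alpha>(1)]
  have "homotopic_with (\<lambda>h. h (-1) = x) S0 X (\<lambda>s. \<alpha> ((s + 1) / 2)) (\<lambda>_. x)"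
    using \<alpha>(2) by (simp add: o_def)
  moreover have "\<phi> s = \<alpha> ((s + 1) / 2)" if "s \<in> {-1, 1}" for s
    using that \<alpha> \<phi>(2) by auto
  ultimately show ?thesis
    unfolding based_S0_homotopic_def by (rule homotopic_with_eq) simp_all
qed

lemma based_S0_map_comp_ell:
  assumes "based_H0_map X x f" "m \<ge> 1"
  shows "continuous_map S0 X (f \<circ> ell m)" "(f \<circ> ell m) (-1) = x"
proof -
  have "f ` H0_set \<subseteq> topspace X" "f 0 = x"
    using assms(1) continuous_map_image_subset_topspace[of H0 X f] by (simp_all add: based_H0_map_def)
  then show "continuous_map S0 X (f \<circ> ell m)" "(f \<circ> ell m) (-1) = x"
    using inverse_nat_in_H0_set[OF assms(2)] by (auto simp: ell_def continuous_map_S0_iff)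
qed

lemma path_connected_imp_pi0_finitary:
  assumes P: "path_connected_space X"
  shows "pi0_finitary_at X x"
  unfolding pi0_finitary_at_def
proof (intro allI impI)
  fix f assume "based_H0_map X x f"
  then have "{m. m \<ge> 1 \<and> \<not> based_S0_homotopic X x (f \<circ> ell m) (\<lambda>_. x)} = {}"
    using path_connected_imp_based_S0_null_homotopic[OF P based_S0_map_comp_ell] by blast
  then show "finite {m. m \<ge> 1 \<and> \<not> based_S0_homotopic X x (f \<circ> ell m) (\<lambda>_. x)}"
    by (simp only: finite.emptyI)
qed

lemma path_connected_pi0_residual_imp_seq_0_connected:
  assumes P: "path_connected_space X" and R: "pi0_residual_at X x"
  shows "seq_0_connected_at X x"
  unfolding seq_0_connected_at_def
proof (intro allI impI)
  fix f g assume fg: "based_H0_map X x f \<and> based_H0_map X x g"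
  have "based_S0_homotopic X x (f \<circ> ell m) (g \<circ> ell m)" if "m \<ge> 1" for m
  proof -
    from fg have "based_H0_map X x f" "based_H0_map X x g"
      by blast+
    then have "based_S0_homotopic X x (f \<circ> ell m) (\<lambda>_. x)" "based_S0_homotopic X x (g \<circ> ell m) (\<lambda>_. x)"
      using path_connected_imp_based_S0_null_homotopic[OF P based_S0_map_comp_ell[OF _ that]] by blast+
    then show ?thesis
      unfolding based_S0_homotopic_def by (meson homotopic_with_sym homotopic_with_trans)
  qed
  then show "based_H0_homotopic X x f g"
    using R fg unfolding pi0_residual_at_def by blast
qed

lemma seq_0_connected_imp_pi0_residual:
  "seq_0_connected_at X x \<Longrightarrow> pi0_residual_at X x"
  by (simp add: seq_0_connected_at_def pi0_residual_at_def)

lemma limitin_H0_inverse_nat: "limitin H0 (\<lambda>k. 1 / real k) 0 sequentially"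
  using continuous_map_H0_iff[of H0 id] by simp

lemma based_H0_map_from_sequence:
  assumes x: "x \<in> topspace X" and xs: "\<And>k. k \<ge> 1 \<Longrightarrow> xs k \<in> topspace X"
    and lim: "limitin X xs x sequentially"
  shows "based_H0_map X x (\<lambda>s. if s = 0 then x else xs (nat \<lfloor>1 / s\<rfloor>))"
    (is "based_H0_map X x ?f")
proof -
  have "?f s \<in> topspace X" if "s \<in> H0_set" for s
    using that by (cases rule: H0_set_cases) (simp_all add: x xs)
  moreover have "limitin X (\<lambda>k. ?f (1 / real k)) (?f 0) sequentially"
  proof (rule limitin_transform_eventually)
    show "\<forall>\<^sub>F k in sequentially. xs k = ?f (1 / real k)"
      using eventually_ge_at_top[of 1] by eventually_elim simp
  qed (simp add: lim)
  ultimately show ?thesis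
    unfolding based_H0_map_def continuous_map_H0_iff image_subset_iff by simp
qed

lemma seq_0_connected_imp_convergent_seqs_on_paths:
  assumes A: "seq_0_connected_at X x" and x: "x \<in> topspace X"
  shows "convergent_seqs_on_paths_at X x"
  unfolding convergent_seqs_on_paths_at_def
proof (intro allI impI)
  fix xs assume xs: "(\<forall>k\<ge>1. xs k \<in> topspace X) \<and> limitin X xs x sequentially"
  define f where "f s = (if s = 0 then x else xs (nat \<lfloor>1 / s\<rfloor>))" for s :: real
  have f_inverse: "f (1 / real k) = xs k" if "k \<ge> 1" for k
    using that by (simp add: f_def)
  have "based_H0_map X x f"
    unfolding f_def using x xs by (intro based_H0_map_from_sequence) auto
  moreover have "based_H0_map X x (\<lambda>_. x)"
    using x by (simp add: based_H0_map_def)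
  ultimately have "based_H0_homotopic X x f (\<lambda>_. x)"
    using A unfolding seq_0_connected_at_def by blast
  then obtain G :: "real \<times> real \<Rightarrow> 'a" where G: "continuous_map (prod_topology (top_of_set {0..1}) H0) X G"
    and G0: "\<And>s. G (0, s) = f s" and G1: "\<And>s. G (1, s) = x"
    and G_base: "\<And>t. t \<in> {0..1} \<Longrightarrow> G (t, 0) = x"
    unfolding based_H0_homotopic_def homotopic_with_def by blast
  define p where "p k t = G (t, 1 / real k)" for k :: nat and t :: real
  have p_paths: "pathin X (p k)" if "k \<ge> 1" for k
  proof -
    have "continuous_map (top_of_set {0..1}) (prod_topology (top_of_set {0..1}) H0) (\<lambda>t::real. (t, 1 / real k))"
      using that by (auto intro!: continuous_map_pairedI simp: inverse_nat_in_H0_set)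
    from continuous_map_compose[OF this G] show ?thesis
      by (simp add: pathin_def p_def[abs_def] o_def)
  qed
  have p_ends: "p k 1 = x" if "k \<ge> 1" for k
    by (simp add: p_def G1)
  have p_shrink: "\<forall>\<^sub>F k in sequentially. p k ` {0..1} \<subseteq> U" if U: "openin X U" "x \<in> U" for U
  proof -
    obtain V where "openin H0 V" "0 \<in> V" and V: "\<And>t d. t \<in> {0..1} \<Longrightarrow> d \<in> V \<Longrightarrow> G (t, d) \<in> U"
      using homotopy_near_fixed_point[OF G _ G_base U] by auto
    then have "\<forall>\<^sub>F k in sequentially. 1 / real k \<in> V"
      using limitin_H0_inverse_nat unfolding limitin_def by blast
    then show ?thesis
      by eventually_elim (auto simp: p_def V)
  qed
  obtain \<alpha> where "pathin X \<alpha>" "\<alpha> 0 = x" "\<And>k. k \<ge> 1 \<Longrightarrow> \<alpha> (1 / real k) = p k 0"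
    using pathin_through_shrinking_paths[OF p_paths p_ends x p_shrink] by blast
  moreover have "p k 0 = xs k" if "k \<ge> 1" for k
    using that by (simp add: p_def G0 f_inverse)
  ultimately show "\<exists>\<alpha>. pathin X \<alpha> \<and> \<alpha> 0 = x \<and> (\<forall>k\<ge>1. \<alpha> (1 / real k) = xs k)"
    by auto
qed

lemma convergent_S0_maps_null_imp_convergent_seqs_on_paths:
  assumes N: "convergent_S0_maps_null_at X x" and x: "x \<in> topspace X"
  shows "convergent_seqs_on_paths_at X x"
  unfolding convergent_seqs_on_paths_at_def
proof (intro allI impI)
  fix xs assume xs: "(\<forall>k\<ge>1. xs k \<in> topspace X) \<and> limitin X xs x sequentially"
  define f where "f k s = (if s = 1 \<and> k \<ge> 1 then xs k else x)" for k :: nat and s :: real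
  have "continuous_map S0 X (f k)" for k
    using x xs by (simp add: f_def continuous_map_S0_iff)
  moreover have "maps_converge_to S0 X f x"
    unfolding maps_converge_to_def
  proof (intro allI impI)
    fix U assume U: "openin X U \<and> x \<in> U"
    then have "\<forall>\<^sub>F k in sequentially. xs k \<in> U"
      using xs by (simp add: limitin_def)
    then show "\<forall>\<^sub>F k in sequentially. f k ` topspace S0 \<subseteq> U"
      by eventually_elim (use U in \<open>auto simp: f_def\<close>)
  qed
  ultimately have "seq_null_homotopic S0 X f x"
    using N unfolding convergent_S0_maps_null_at_def by blast
  then obtain H :: "nat \<Rightarrow> real \<times> real \<Rightarrow> 'a"
    where H: "\<And>k. continuous_map (prod_topology (top_of_set {0..1}) S0) X (H k)"
      and H0: "\<And>k s. s \<in> {-1, 1} \<Longrightarrow> H k (0, s) = f k s"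
      and H1: "\<And>k s. s \<in> {-1, 1} \<Longrightarrow> H k (1, s) = x"
      and H_conv: "maps_converge_to (prod_topology (top_of_set {0..1}) S0) X H x"
    unfolding seq_null_homotopic_def topspace_S0 by blast
  define p where "p k t = H k (t, 1)" for k :: nat and t :: real
  have p_paths: "pathin X (p k)" if "k \<ge> 1" for k
  proof -
    have "continuous_map (top_of_set {0..1}) (prod_topology (top_of_set {0..1}) S0) (\<lambda>t::real. (t, 1::real))"
      by (auto intro!: continuous_map_pairedI)
    from continuous_map_compose[OF this H] show ?thesis
      by (simp add: pathin_def p_def[abs_def] o_def)
  qed
  have p_ends: "p k 1 = x" if "k \<ge> 1" for k
    by (simp add: p_def H1)
  have p_shrink: "\<forall>\<^sub>F k in sequentially. p k ` {0..1} \<subseteq> U" if "openin X U" "x \<in> U" for U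
  proof -
    have "\<forall>\<^sub>F k in sequentially. H k ` ({0..1} \<times> {-1, 1}) \<subseteq> U"
      using H_conv that unfolding maps_converge_to_def by simp
    then show ?thesis
      by eventually_elim (auto simp: p_def)
  qed
  obtain \<alpha> where "pathin X \<alpha>" "\<alpha> 0 = x" "\<And>k. k \<ge> 1 \<Longrightarrow> \<alpha> (1 / real k) = p k 0"
    using pathin_through_shrinking_paths[OF p_paths p_ends x p_shrink] by blast
  moreover have "p k 0 = xs k" if "k \<ge> 1" for k
    using that by (simp add: p_def H0 f_def)
  ultimately show "\<exists>\<alpha>. pathin X \<alpha> \<and> \<alpha> 0 = x \<and> (\<forall>k\<ge>1. \<alpha> (1 / real k) = xs k)"
    by auto
qed

lemma convergent_seqs_on_paths_imp_convergent_S0_maps_null: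
  assumes E: "convergent_seqs_on_paths_at X x" and x: "x \<in> topspace X"
  shows "convergent_S0_maps_null_at X x"
  unfolding convergent_S0_maps_null_at_def
proof (intro allI impI)
  fix f assume f: "(\<forall>k. continuous_map S0 X (f k)) \<and> maps_converge_to S0 X f x"
  define xs where "xs j = f ((j - 1) div 2) (if odd j then -1 else 1)" for j :: nat
  have "xs j \<in> topspace X" for j
    using f by (simp add: xs_def continuous_map_S0_iff)
  moreover have "limitin X xs x sequentially"
    unfolding limitin_def
  proof (intro conjI allI impI x)
    fix U assume "openin X U \<and> x \<in> U"
    then obtain K where K: "\<And>k. k \<ge> K \<Longrightarrow> f k ` {-1, 1} \<subseteq> U"
      using f unfolding maps_converge_to_def eventually_sequentially topspace_S0 by blast
    have "xs j \<in> U" if "j \<ge> 2 * K + 1" for j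
    proof -
      from that have "(j - 1) div 2 \<ge> K" by linarith
      then show ?thesis using K by (auto simp: xs_def)
    qed
    then show "\<forall>\<^sub>F j in sequentially. xs j \<in> U"
      unfolding eventually_sequentially by blast
  qed
  ultimately obtain \<alpha> where \<alpha>: "pathin X \<alpha>" "\<alpha> 0 = x" "\<And>j. j \<ge> 1 \<Longrightarrow> \<alpha> (1 / real j) = xs j"
    using convergent_seqs_on_pathsD[OF E, of xs] by blast
  \<comment> \<open>\<open>\<alpha>\<close> passes \<open>f k s\<close> at time \<open>c k s\<close>\<close>
  define c where "c k s = 1 / real (2 * k + (if s = -1 then 1 else 2))" for k :: nat and s :: real
  have c_S0: "continuous_map S0 (top_of_set {0..1}) (c k)" for k
    by (simp add: c_def continuous_map_S0_iff)
  have "continuous_map (prod_topology (top_of_set {0..1}) S0) X (\<lambda>z. \<alpha> ((1 - fst z) * c k (snd z)))" for k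
    using c_S0 \<alpha>(1) by (rule continuous_map_path_contraction)
  moreover have "\<alpha> ((1 - 0) * c k s) = f k s" "\<alpha> ((1 - 1) * c k s) = x" if "s \<in> {-1, 1}" for k s
  proof -
    have "\<alpha> (c k (-1)) = f k (-1)" "\<alpha> (c k 1) = f k 1"
      using \<alpha>(3)[of "2 * k + 1"] \<alpha>(3)[of "2 * k + 2"] by (simp_all add: c_def xs_def)
    then show "\<alpha> ((1 - 0) * c k s) = f k s" "\<alpha> ((1 - 1) * c k s) = x"
      using that \<alpha>(2) by auto
  qed
  moreover have "maps_converge_to (prod_topology (top_of_set {0..1}) S0) X
      (\<lambda>k z. \<alpha> ((1 - fst z) * c k (snd z))) x"
  proof -
    have "maps_converge_to (prod_topology (top_of_set {0..1}) S0) X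
        (\<lambda>k z. \<alpha> ((1 - fst z) * c k (snd z))) (\<alpha> 0)"
      by (rule maps_converge_to_path_contraction[OF \<alpha>(1) _ _ LIMSEQ_inverse_real_of_nat])
        (auto simp: c_def field_simps)
    then show ?thesis
      using \<alpha>(2) by simp
  qed
  ultimately show "seq_null_homotopic S0 X f x"
    unfolding seq_null_homotopic_def topspace_S0
    by (intro exI[of _ "\<lambda>k z. \<alpha> ((1 - fst z) * c k (snd z))"]) simp
qed

theorem lemma2p21:
  fixes X :: "'a topology" and x :: 'a
  assumes "Hausdorff_space X" and "x \<in> topspace X"
  shows "(seq_0_connected_at X x \<longleftrightarrow> path_connected_space X \<and> tame0_at X x)
    \<and> (path_connected_space X \<and> tame0_at X x \<longleftrightarrow> path_connected_space X \<and> pi0_residual_at X x)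
    \<and> (path_connected_space X \<and> pi0_residual_at X x \<longleftrightarrow>
         (\<forall>f :: nat \<Rightarrow> real \<Rightarrow> 'a. (\<forall>k. continuous_map S0 X (f k)) \<and> maps_converge_to S0 X f x
            \<longrightarrow> seq_null_homotopic S0 X f x))
    \<and> ((\<forall>f :: nat \<Rightarrow> real \<Rightarrow> 'a. (\<forall>k. continuous_map S0 X (f k)) \<and> maps_converge_to S0 X f x
            \<longrightarrow> seq_null_homotopic S0 X f x) \<longleftrightarrow>
       (\<forall>xs :: nat \<Rightarrow> 'a. (\<forall>k\<ge>1. xs k \<in> topspace X) \<and> limitin X xs x sequentially
            \<longrightarrow> (\<exists>\<alpha>. pathin X \<alpha> \<and> \<alpha> 0 = x \<and> (\<forall>k\<ge>1. \<alpha> (1 / real k) = xs k))))"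
proof -
  note x = \<open>x \<in> topspace X\<close>
  have "seq_0_connected_at X x \<longleftrightarrow> convergent_seqs_on_paths_at X x"
    using seq_0_connected_imp_convergent_seqs_on_paths[OF _ x]
      convergent_seqs_on_paths_imp_seq_0_connected by (rule iffI)
  moreover have "convergent_S0_maps_null_at X x \<longleftrightarrow> convergent_seqs_on_paths_at X x"
    using convergent_S0_maps_null_imp_convergent_seqs_on_paths[OF _ x]
      convergent_seqs_on_paths_imp_convergent_S0_maps_null[OF _ x] by (rule iffI)
  moreover have "convergent_seqs_on_paths_at X x \<Longrightarrow> path_connected_space X"
    using convergent_seqs_on_paths_imp_path_connected[OF _ x] .
  moreover note seq_0_connected_imp_pi0_residual[of X x]
    path_connected_imp_pi0_finitary[of X x]
    path_connected_pi0_residual_imp_seq_0_connected[of X x]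
  ultimately show ?thesis
    unfolding tame0_at_def
      convergent_S0_maps_null_at_def[symmetric] convergent_seqs_on_paths_at_def[symmetric]
    by blast
qed

end
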